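(* Fix total velocities $(\overline{u}_{T,k+1/2})_{k=1}^4\in\mathbb{R}^4$. Then for each phase $\ell\in\{w,\textit{nw}\}$, each $k\in\{1,\dots,4\}$ and each $j\in\{1,\dots,4\}$ with $j\neq k$, $$\frac{\partial\big(\overline{V}_{\ell,k+1/2}-\overline{V}_{\ell,k-1/2}\big)}{\partial S_{\ell,j}}\le 0 .$$
   Context: Indices in $\{1,2,3,4\}$ are cyclic mod 4 (vertices of an interaction region, labeled counterclockwise; half-interface $k+1/2$ joins vertex $k$ to vertex $k+1$, and $\overline{u}_{T,k+1/2}>0$ means flow from $k$ to $k+1$). $S_j$ is the wetting saturation at vertex $j$; $S_{w,j}=S_j$, $S_{\textit{nw},j}=1-S_j$, so $\partial/\partial S_{\textit{nw},j}=-\partial/\partial S_j$. Mobilities $\lambda_w,\lambda_{\textit{nw}}$ are positive differentiable functions of $S$, with $\lambda_w$ nondecreasing and $\lambda_{\textit{nw}}$ nonincreasing in $S$; $\lambda_T=\lambda_w+\lambda_{\textit{nw}}$; $\chi_{\ell,j}=\lambda_\ell(S_j)/\lambda_T(S_j)$, $\boldsymbol{\chi}_\ell=(\chi_{\ell,1},\dots,\chi_{\ell,4})^T$. Limiter $\varphi(r)=\dfrac{r^4+r^3+r^2+r}{r^4+r^3+r^2+r+1}$, $r\ge0$. $\overline{\omega}^V_{k+1/2}=\varphi(\max(0,\overline{u}_{T,k-1/2}/\overline{u}_{T,k+1/2}))$ if $\overline{u}_{T,k+1/2}>0$, $=\varphi(\max(0,\overline{u}_{T,k+3/2}/\overline{u}_{T,k+1/2}))$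 if $\overline{u}_{T,k+1/2}<0$, $=0$ otherwise. $\boldsymbol{A}$: $a_{kk}=1$, $a_{k,k-1}=-\overline{\omega}^V_{k+1/2}$ if $\overline{u}_{T,k+1/2}\ge0$ (else $0$), $a_{k,k+1}=-\overline{\omega}^V_{k+1/2}$ if $\overline{u}_{T,k+1/2}<0$ (else $0$), other entries $0$. $\boldsymbol{B}$: $b_{kk}=1-\overline{\omega}^V_{k+1/2}$ if $\overline{u}_{T,k+1/2}\ge0$ (else $0$), $b_{k,k+1}=1-\overline{\omega}^V_{k+1/2}$ if $\overline{u}_{T,k+1/2}<0$ (else $0$), other entries $0$. The interfacial mobility ratios are $\overline{\boldsymbol{\chi}}_\ell=\boldsymbol{A}^{-1}\boldsymbol{B}\boldsymbol{\chi}_\ell$ with entries $\overline{\chi}_{\ell,k+1/2}$, and the viscous flux is $\overline{V}_{\ell,k+1/2}=\overline{\chi}_{\ell,k+1/2}\overline{u}_{T,k+1/2}$. The total velocities (hence $\boldsymbol{A},\boldsymbol{B}$) are held fixed when differentiating. *)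

theory Defs
  imports "HOL-Analysis.Analysis" "HOL-Library.Numeral_Type"
begin

text \<open>Vertices of an interaction region are indexed by the type 4 (integers mod 4),
so index arithmetic k+1, k-1 is cyclic. Vertex label 4 is identified with 0.
The half-interface k+1/2 is indexed by k; hence u $ k is the total velocity
at k+1/2, u $ (k - 1) that at k-1/2 and u $ (k + 1) that at k+3/2.\<close>

datatype phase = Wet | NonWet

definition limiter :: "real \<Rightarrow> real" where
  "limiter r = (r^4 + r^3 + r^2 + r) / (r^4 + r^3 + r^2 + r + 1)"

definition omegaV :: "real^4 \<Rightarrow> 4 \<Rightarrow> real" where
  "omegaV u k =
     (if u $ k > 0 then limiter (max 0 (u $ (k - 1) / u $ k))
      else if u $ k < 0 then limiter (max 0 (u $ (k + 1) / u $ k))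
      else 0)"

definition matA :: "real^4 \<Rightarrow> real^4^4" where
  "matA u = (\<chi> k m.
      (if m = k then 1 else 0)
    + (if u $ k \<ge> 0 \<and> m = k - 1 then - omegaV u k else 0)
    + (if u $ k < 0 \<and> m = k + 1 then - omegaV u k else 0))"

definition matB :: "real^4 \<Rightarrow> real^4^4" where
  "matB u = (\<chi> k m.
      (if u $ k \<ge> 0 \<and> m = k then 1 - omegaV u k else 0)
    + (if u $ k < 0 \<and> m = k + 1 then 1 - omegaV u k else 0))"

definition mobility :: "(real \<Rightarrow> real) \<Rightarrow> (real \<Rightarrow> real) \<Rightarrow> phase \<Rightarrow> real \<Rightarrow> real" where
  "mobility lw lnw p s = (case p of Wet \<Rightarrow> lw s | NonWet \<Rightarrow> lnw s)"

definition chiVec :: "(real \<Rightarrow> real) \<Rightarrow> (real \<Rightarrow> real) \<Rightarrow> phase \<Rightarrow> real^4 \<Rightarrow> real^4" where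
  "chiVec lw lnw p S = (\<chi> j. mobility lw lnw p (S $ j) / (lw (S $ j) + lnw (S $ j)))"

definition chiBar :: "(real \<Rightarrow> real) \<Rightarrow> (real \<Rightarrow> real) \<Rightarrow> real^4 \<Rightarrow> phase \<Rightarrow> real^4 \<Rightarrow> real^4" where
  "chiBar lw lnw u p S = (matrix_inv (matA u) ** matB u) *v chiVec lw lnw p S"

definition viscFlux :: "(real \<Rightarrow> real) \<Rightarrow> (real \<Rightarrow> real) \<Rightarrow> real^4 \<Rightarrow> phase \<Rightarrow> real^4 \<Rightarrow> 4 \<Rightarrow> real" where
  "viscFlux lw lnw u p S k = chiBar lw lnw u p S $ k * u $ k"

definition phaseSat :: "phase \<Rightarrow> real^4 \<Rightarrow> 4 \<Rightarrow> real" where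
  "phaseSat p S j = (case p of Wet \<Rightarrow> S $ j | NonWet \<Rightarrow> 1 - S $ j)"

definition setPhaseSat :: "phase \<Rightarrow> real^4 \<Rightarrow> 4 \<Rightarrow> real \<Rightarrow> real^4" where
  "setPhaseSat p S j s =
     (\<chi> i. if i = j then (case p of Wet \<Rightarrow> s | NonWet \<Rightarrow> 1 - s) else S $ i)"

end

theory Submission
  imports Defs
begin

text \<open>
Row k of A is e_k - \<omega>_k e_{k'} and row k of B is (1 - \<omega>_k) e_{k''}, where k' is the interface
and k'' the vertex upstream of the half-interface k. Since 0 \<le> \<omega>_k < 1, a discrete minimum
principle shows that A is invertible and that M = A\<inverse>B is entrywise nonnegative with
M_k = \<omega>_k M_{k'} + (1 - \<omega>_k) e_{k''}. The flux difference is affine in \<chi>_{\<ell>,j} with slope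
M_{kj} u_k - M_{k-1,j} u_{k-1}; for j \<noteq> k the recursion links the two rows through \<omega>, and the
limiter bound \<phi>(r) \<le> r makes the slope nonpositive. Finally \<chi>_{\<ell>,j} = \<lambda>_\<ell>/(\<lambda>_w + \<lambda>_nw) is
nondecreasing in S_{\<ell>,j} because \<lambda>_\<ell> increases and the other mobility decreases with S_{\<ell>,j}.
\<close>

definition upstream_interface :: "real^4 \<Rightarrow> 4 \<Rightarrow> 4" where
  "upstream_interface u k = (if u $ k \<ge> 0 then k - 1 else k + 1)"

definition upstream_vertex :: "real^4 \<Rightarrow> 4 \<Rightarrow> 4" where
  "upstream_vertex u k = (if u $ k \<ge> 0 then k else k + 1)"

definition upwind_matrix :: "real^4 \<Rightarrow> real^4^4" where
  "upwind_matrix u = matrix_inv (matA u) ** matB u"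

lemma limiter_bounds:
  assumes "0 \<le> r"
  shows "0 \<le> limiter r" and "limiter r < 1" and "limiter r \<le> r"
proof -
  define N where "N = r^4 + r^3 + r^2 + r"
  have "0 \<le> N" using assms by (simp add: N_def)
  moreover have "N \<le> r * (N + 1)"
    using assms by (simp add: N_def algebra_simps power_numeral_reduce)
  ultimately show "0 \<le> limiter r" "limiter r < 1" "limiter r \<le> r"
    unfolding limiter_def N_def[symmetric] by (simp_all add: divide_simps)
qed

lemma limiter_0 [simp]: "limiter 0 = 0"
  by (simp add: limiter_def)

lemma omegaV_nonneg: "0 \<le> omegaV u k"
  by (simp add: omegaV_def limiter_bounds(1))

lemma omegaV_less_one: "omegaV u k < 1"
  by (simp add: omegaV_def limiter_bounds(2))

lemma omegaV_mult_le_upstream: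
  assumes "0 < u $ k" "0 \<le> u $ (k - 1)"
  shows "omegaV u k * u $ k \<le> u $ (k - 1)"
proof -
  have "omegaV u k \<le> u $ (k - 1) / u $ k"
    using assms by (simp add: omegaV_def limiter_bounds(3))
  then show ?thesis using assms(1) by (simp add: pos_le_divide_eq)
qed

lemma omegaV_mult_ge_upstream:
  assumes "u $ k < 0" "u $ (k + 1) \<le> 0"
  shows "u $ (k + 1) \<le> omegaV u k * u $ k"
proof -
  have "omegaV u k \<le> u $ (k + 1) / u $ k"
    using assms by (simp add: omegaV_def limiter_bounds(3) divide_nonpos_neg)
  then show ?thesis using assms(1) by (simp add: neg_le_divide_eq mult.commute)
qed

lemma omegaV_eq_0_if_upstream_opposite:
  shows "0 < u $ k \<Longrightarrow> u $ (k - 1) \<le> 0 \<Longrightarrow> omegaV u k = 0"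
    and "u $ k < 0 \<Longrightarrow> 0 \<le> u $ (k + 1) \<Longrightarrow> omegaV u k = 0"
  by (simp_all add: omegaV_def divide_nonpos_pos divide_nonneg_neg)

lemma matA_mult_vec: "(matA u *v x) $ k = x $ k - omegaV u k * x $ upstream_interface u k"
  unfolding matA_def matrix_vector_mult_def upstream_interface_def
  by (simp add: sum.distrib ring_distribs if_distrib[where f="\<lambda>a. a * _"] cong: if_cong)

lemma matA_mult: "(matA u ** X) $ k $ j = X $ k $ j - omegaV u k * X $ upstream_interface u k $ j"
  unfolding matA_def matrix_matrix_mult_def upstream_interface_def
  by (simp add: sum.distrib ring_distribs if_distrib[where f="\<lambda>a. a * _"] cong: if_cong)

lemma matB_component: "matB u $ k $ j = (if j = upstream_vertex u k then 1 - omegaV u k else 0)"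
  unfolding matB_def upstream_vertex_def by auto

lemma nonneg_if_dominates_weighted_shift:
  fixes x w :: "'a::finite \<Rightarrow> real"
  assumes "\<And>i. 0 \<le> w i" "\<And>i. w i < 1" "\<And>i. w i * x (f i) \<le> x i"
  shows "0 \<le> x i"
proof -
  obtain m where m: "\<And>i. x m \<le> x i"
    using ex_is_arg_min_if_finite[of UNIV x] by (auto simp: is_arg_min_linorder)
  have "w m * x m \<le> x m"
    using assms(1,3)[of m] mult_left_mono[OF m[of "f m"] assms(1)[of m]] by linarith
  then have "0 \<le> (1 - w m) * x m" by (simp add: algebra_simps)
  then have "0 \<le> x m" using assms(2)[of m] by (simp add: zero_le_mult_iff)
  then show ?thesis using m[of i] by linarith
qed

lemma invertible_matA: "invertible (matA u)"
proof -
  have "x = 0" if "matA u *v x = 0" for x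
  proof -
    have fix_x: "omegaV u i * x $ upstream_interface u i = x $ i" for i
      using arg_cong[OF that, of "\<lambda>v. v $ i"] by (simp add: matA_mult_vec)
    have "0 \<le> x $ i" for i
      using nonneg_if_dominates_weighted_shift[of "omegaV u" "\<lambda>i. x $ i" "upstream_interface u",
          OF omegaV_nonneg omegaV_less_one] fix_x by simp
    moreover have "0 \<le> - x $ i" for i
      using nonneg_if_dominates_weighted_shift[of "omegaV u" "\<lambda>i. - x $ i" "upstream_interface u",
          OF omegaV_nonneg omegaV_less_one] fix_x by simp
    ultimately show "x = 0" by (auto simp: vec_eq_iff intro: order_antisym)
  qed
  then show ?thesis
    unfolding invertible_left_inverse matrix_left_invertible_ker by blast
qed

lemma matrix_inv_right:
  fixes A :: "'a::semiring_1^'n^'n"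
  assumes "invertible A"
  shows "A ** matrix_inv A = mat 1"
  using assms unfolding invertible_def matrix_inv_def by (rule someI2_ex) blast

lemma upwind_matrix_component:
  "upwind_matrix u $ k $ j = omegaV u k * upwind_matrix u $ upstream_interface u k $ j
     + (if j = upstream_vertex u k then 1 - omegaV u k else 0)"
proof -
  have "matA u ** matrix_inv (matA u) = mat 1"
    by (rule matrix_inv_right[OF invertible_matA])
  then have "matA u ** upwind_matrix u = matB u"
    by (metis upwind_matrix_def matrix_mul_assoc matrix_mul_lid)
  from arg_cong[OF this, of "\<lambda>X. X $ k $ j"] show ?thesis
    by (simp add: matA_mult matB_component)
qed

lemma upwind_matrix_nonneg: "0 \<le> upwind_matrix u $ k $ j"
  by (rule nonneg_if_dominates_weighted_shift[of "omegaV u" _ "upstream_interface u",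
        OF omegaV_nonneg omegaV_less_one])
     (subst (2) upwind_matrix_component, simp add: omegaV_less_one less_imp_le)

lemma upwind_matrix_flux_coeff_le:
  assumes "j \<noteq> k"
  shows "upwind_matrix u $ k $ j * u $ k \<le> upwind_matrix u $ (k - 1) $ j * u $ (k - 1)"
proof -
  let ?M = "\<lambda>i. upwind_matrix u $ i $ j"
  have nonneg: "\<And>i. 0 \<le> ?M i" by (rule upwind_matrix_nonneg)
  have rec_k: "?M k = omegaV u k * ?M (k - 1)" if "0 < u $ k"
    using upwind_matrix_component[of u k j] that assms
    by (simp add: upstream_interface_def upstream_vertex_def)
  have rec_k1: "?M (k - 1) = omegaV u (k - 1) * ?M k" if "u $ (k - 1) < 0"
    using upwind_matrix_component[of u "k - 1" j] that assms
    by (simp add: upstream_interface_def upstream_vertex_def)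
  consider "0 < u $ k" "0 \<le> u $ (k - 1)" | "0 < u $ k" "u $ (k - 1) < 0"
    | "u $ k \<le> 0" "0 \<le> u $ (k - 1)" | "u $ k \<le> 0" "u $ (k - 1) < 0"
    by linarith
  then show ?thesis
  proof cases
    case 1
    then have "?M (k - 1) * (omegaV u k * u $ k) \<le> ?M (k - 1) * u $ (k - 1)"
      using nonneg by (intro mult_left_mono omegaV_mult_le_upstream)
    then show ?thesis using rec_k[OF 1(1)] by (simp add: algebra_simps)
  next
    case 2
    have "omegaV u k = 0" "omegaV u (k - 1) = 0"
      using 2 omegaV_eq_0_if_upstream_opposite[of u k] omegaV_eq_0_if_upstream_opposite(2)[of u "k - 1"]
      by simp_all
    then show ?thesis using rec_k[OF 2(1)] rec_k1[OF 2(2)] by simp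
  next
    case 3
    then have "?M k * u $ k \<le> 0" "0 \<le> ?M (k - 1) * u $ (k - 1)"
      using nonneg[of k] nonneg[of "k - 1"] by (simp_all add: mult_nonneg_nonpos)
    then show ?thesis by linarith
  next
    case 4
    have "u $ k \<le> omegaV u (k - 1) * u $ (k - 1)"
      using omegaV_mult_ge_upstream[of u "k - 1"] 4 by simp
    then have "?M k * u $ k \<le> ?M k * (omegaV u (k - 1) * u $ (k - 1))"
      using nonneg by (rule mult_left_mono)
    then show ?thesis using rec_k1[OF 4(2)] by (simp add: algebra_simps)
  qed
qed

lemma fractional_flow_deriv_nonneg:
  fixes a b :: "real \<Rightarrow> real"
  assumes "\<And>t. 0 < a t" "\<And>t. 0 < b t" "mono a" "antimono b"
    and da: "(a has_real_derivative da) (at x)" and db: "(b has_real_derivative db) (at x)"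
  shows "\<exists>D. ((\<lambda>t. a t / (a t + b t)) has_real_derivative D) (at x) \<and> 0 \<le> D"
proof -
  have "0 \<le> da"
    using mono_on_imp_deriv_nonneg[of UNIV a] assms(3) da by simp
  moreover have "0 \<le> - db"
  proof -
    have "mono_on UNIV (\<lambda>t. - b t)"
      using assms(4) by (simp add: antimono_def monotone_on_def)
    then show ?thesis using DERIV_minus[OF db] by (rule mono_on_imp_deriv_nonneg) simp
  qed
  ultimately have "0 \<le> da * b x + a x * - db"
    using assms(1,2)[of x] by (intro add_nonneg_nonneg mult_nonneg_nonneg) simp_all
  then have "0 \<le> (da * b x - a x * db) / (a x + b x)^2" by simp
  moreover have "((\<lambda>t. a t / (a t + b t)) has_real_derivative
      (da * b x - a x * db) / (a x + b x)^2) (at x)"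
    using assms(1,2)[of x] by (auto intro!: derivative_eq_intros da db simp: field_simps power2_eq_square)
  ultimately show ?thesis by blast
qed

lemma chiVec_setPhaseSat_deriv_nonneg:
  assumes "\<And>s. 0 < lw s" "\<And>s. 0 < lnw s"
    and "\<And>s. lw differentiable (at s)" "\<And>s. lnw differentiable (at s)"
    and "mono lw" "antimono lnw"
  shows "\<exists>D. ((\<lambda>s. chiVec lw lnw p (setPhaseSat p S j s) $ j) has_real_derivative D) (at x)
           \<and> 0 \<le> D"
proof -
  have deriv: "\<exists>dw dnw. (lw has_real_derivative dw) (at y) \<and> (lnw has_real_derivative dnw) (at y)" for y
    using assms(3,4) by (simp add: real_differentiable_def)
  show ?thesis
  proof (cases p)
    case Wet
    obtain dw dnw where "(lw has_real_derivative dw) (at x)" "(lnw has_real_derivative dnw) (at x)"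
      using deriv by blast
    moreover have "(\<lambda>s. chiVec lw lnw p (setPhaseSat p S j s) $ j) = (\<lambda>s. lw s / (lw s + lnw s))"
      using Wet by (simp add: chiVec_def setPhaseSat_def mobility_def)
    ultimately show ?thesis
      using fractional_flow_deriv_nonneg[OF assms(1,2,5,6)] by simp
  next
    case NonWet
    obtain dw dnw where dw: "(lw has_real_derivative dw) (at (1 - x))"
      and dnw: "(lnw has_real_derivative dnw) (at (1 - x))"
      using deriv by blast
    have reflect: "((\<lambda>s. 1 - s) has_real_derivative - 1) (at x)"
      by (auto intro!: derivative_eq_intros)
    have "((\<lambda>s. lnw (1 - s)) has_real_derivative dnw * - 1) (at x)"
      and "((\<lambda>s. lw (1 - s)) has_real_derivative dw * - 1) (at x)"
      using DERIV_chain2[where g="\<lambda>s. 1 - s", OF _ reflect] dnw dw by simp_all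
    moreover have "mono (\<lambda>s. lnw (1 - s))" "antimono (\<lambda>s. lw (1 - s))"
      using assms(5,6) by (auto simp: mono_def antimono_def)
    moreover have "(\<lambda>s. chiVec lw lnw p (setPhaseSat p S j s) $ j)
        = (\<lambda>s. lnw (1 - s) / (lnw (1 - s) + lw (1 - s)))"
      using NonWet by (simp add: chiVec_def setPhaseSat_def mobility_def add.commute)
    ultimately show ?thesis
      using fractional_flow_deriv_nonneg[of "\<lambda>s. lnw (1 - s)" "\<lambda>s. lw (1 - s)"] assms(1,2)
      by simp
  qed
qed

lemma chiVec_setPhaseSat_other:
  "i \<noteq> j \<Longrightarrow> chiVec lw lnw p (setPhaseSat p S j s) $ i = chiVec lw lnw p S $ i"
  by (simp add: chiVec_def setPhaseSat_def)

lemma matrix_vector_mult_component_split: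
  fixes M :: "'a::comm_ring_1^'n^'m"
  shows "(M *v x) $ i = M $ i $ j * x $ j + (\<Sum>m\<in>UNIV - {j}. M $ i $ m * x $ m)"
  unfolding matrix_vector_mult_def by (simp add: sum.remove[of UNIV j])

theorem mainTheorem4:
  fixes lw lnw :: "real \<Rightarrow> real" and u S :: "real^4" and p :: phase and k j :: 4
  assumes pos_w: "\<And>s. lw s > 0"
    and pos_nw: "\<And>s. lnw s > 0"
    and diff_w: "\<And>s. lw differentiable (at s)"
    and diff_nw: "\<And>s. lnw differentiable (at s)"
    and mono_w: "mono lw"
    and anti_nw: "antimono lnw"
    and jk: "j \<noteq> k"
  shows "\<exists>D. ((\<lambda>s. viscFlux lw lnw u p (setPhaseSat p S j s) k
                  - viscFlux lw lnw u p (setPhaseSat p S j s) (k - 1))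
              has_real_derivative D) (at (phaseSat p S j))
            \<and> D \<le> 0"
proof -
  let ?M = "upwind_matrix u"
  define chi where "chi s = chiVec lw lnw p (setPhaseSat p S j s) $ j" for s
  define r where "r i = (\<Sum>m\<in>UNIV - {j}. ?M $ i $ m * chiVec lw lnw p S $ m)" for i
  define C where "C = ?M $ k $ j * u $ k - ?M $ (k - 1) $ j * u $ (k - 1)"
  have "chiBar lw lnw u p (setPhaseSat p S j s) $ i = ?M $ i $ j * chi s + r i" for s i
    unfolding chiBar_def upwind_matrix_def[symmetric] matrix_vector_mult_component_split[of _ _ _ j]
      chi_def r_def by (simp add: chiVec_setPhaseSat_other)
  then have flux_diff: "(\<lambda>s. viscFlux lw lnw u p (setPhaseSat p S j s) k
                  - viscFlux lw lnw u p (setPhaseSat p S j s) (k - 1))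
         = (\<lambda>s. C * chi s + (r k * u $ k - r (k - 1) * u $ (k - 1)))"
    by (simp add: viscFlux_def C_def algebra_simps)
  obtain D where D: "(chi has_real_derivative D) (at (phaseSat p S j))" "0 \<le> D"
    using chiVec_setPhaseSat_deriv_nonneg[OF assms(1-6)] unfolding chi_def by blast
  have "C \<le> 0"
    using upwind_matrix_flux_coeff_le[OF jk] by (simp add: C_def)
  then have "C * D \<le> 0" using D(2) by (rule mult_nonpos_nonneg)
  moreover have "((\<lambda>s. C * chi s + (r k * u $ k - r (k - 1) * u $ (k - 1)))
      has_real_derivative C * D) (at (phaseSat p S j))"
    using D(1) by (auto intro!: derivative_eq_intros)
  ultimately show ?thesis unfolding flux_diff by blast
qed

end
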